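(* For every base $\mathscr{B}$, finite multisets of atoms $S,T$, and IMLL formulas $\varphi,\psi,\chi$: if $\Vdash^{S}_{\mathscr{B}}\varphi\otimes\psi$ and $\varphi,\psi\Vdash^{T}_{\mathscr{B}}\chi$, then $\Vdash^{S,T}_{\mathscr{B}}\chi$.
   Context: Fix a countably infinite set $\mathbb{A}$ of atoms. IMLL formulas: $\varphi::= p\in\mathbb{A}\mid\varphi\otimes\varphi\mid \mathrm{I}\mid\varphi\multimap\varphi$. Collections are finite multisets; "$,$" denotes multiset union. An atomic rule is $(P_1\triangleright p_1,\dots,P_n\triangleright p_n)\Rightarrow p$ ($n\ge0$, $P_i$ finite multisets of atoms); a base is a set of atomic rules. Derivability $\vdash_{\mathscr{B}}$ is the least relation with (Ref) $[p]\vdash_{\mathscr{B}}p$; (App) if $(P_1\triangleright p_1,\dots,P_n\triangleright p_n)\Rightarrow p\in\mathscr{B}$ and $S_i,P_i\vdash_{\mathscr{B}}p_i$ for all $i$, then $S_1,\dots,S_n\vdash_{\mathscr{B}}p$. Support: (At) $\Vdash^{P}_{\mathscr{B}}p$ iff $P\vdash_{\mathscr{B}}p$; ($\otimes$) $\Vdash^{P}_{\mathscr{B}}\varphi\otimes\psi$ iff for every $\mathscr{X}\supseteq\mathscr{B}$, multiset of atoms $U$, atom $p$, if $\varphi,\psi\Vdash^{U}_{\mathscr{X}}p$ then $\Vdash^{P,U}_{\mathscr{X}}p$; ($\mathrm{I}$) $\Vdash^{P}_{\mathscr{B}}\mathrm{I}$ iff for every $\mathscr{X}\supseteq\mathscr{B}$,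 $U$, $p$, if $\Vdash^{U}_{\mathscr{X}}p$ then $\Vdash^{P,U}_{\mathscr{X}}p$; ($\multimap$) $\Vdash^{P}_{\mathscr{B}}\varphi\multimap\psi$ iff $\varphi\Vdash^{P}_{\mathscr{B}}\psi$; (comma) for nonempty $\Gamma,\Delta$, $\Vdash^{P}_{\mathscr{B}}\Gamma,\Delta$ iff $P=U,V$ for some $U,V$ with $\Vdash^{U}_{\mathscr{B}}\Gamma$, $\Vdash^{V}_{\mathscr{B}}\Delta$ (singleton $[\varphi]$ supported iff $\varphi$ is); (Inf) for nonempty $\Gamma$, $\Gamma\Vdash^{P}_{\mathscr{B}}\varphi$ iff for every $\mathscr{X}\supseteq\mathscr{B}$ and $U$, if $\Vdash^{U}_{\mathscr{X}}\Gamma$ then $\Vdash^{P,U}_{\mathscr{X}}\varphi$. *)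

theory Defs
  imports Main "HOL-Library.Multiset"
begin

type_synonym atom = nat

datatype formula =
    Atom atom
  | Tensor formula formula
  | One
  | Lolli formula formula

text \<open>An atomic rule (P1|>p1, ..., Pn|>pn) => p is a pair (premise list, conclusion).\<close>
type_synonym rule = "(atom multiset \<times> atom) list \<times> atom"
type_synonym base = "rule set"

inductive derives :: "base \<Rightarrow> atom multiset \<Rightarrow> atom \<Rightarrow> bool" for B :: base where
  Ref: "derives B {#p#} p"
| App: "\<lbrakk> (Ps, p) \<in> B; length Ss = length Ps;
          \<forall>i<length Ps. derives B (Ss ! i + fst (Ps ! i)) (snd (Ps ! i)) \<rbrakk>
        \<Longrightarrow> derives B (sum_list Ss) p"

text \<open>Support: supp phi B P means  ||-^P_B phi.\<close>
primrec supp :: "formula \<Rightarrow> base \<Rightarrow> atom multiset \<Rightarrow> bool" where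
  "supp (Atom p) B P = derives B P p"
| "supp (Tensor \<phi> \<psi>) B P =
     (\<forall>X U p. B \<subseteq> X \<longrightarrow>
        (\<forall>Y W. X \<subseteq> Y \<longrightarrow> (\<exists>W1 W2. W = W1 + W2 \<and> supp \<phi> Y W1 \<and> supp \<psi> Y W2)
                 \<longrightarrow> derives Y (U + W) p)
        \<longrightarrow> derives X (P + U) p)"
| "supp One B P =
     (\<forall>X U p. B \<subseteq> X \<longrightarrow> derives X U p \<longrightarrow> derives X (P + U) p)"
| "supp (Lolli \<phi> \<psi>) B P =
     (\<forall>X U. B \<subseteq> X \<longrightarrow> supp \<phi> X U \<longrightarrow> supp \<psi> X (P + U))"

text \<open>Support of a nonempty context (comma clause); contexts written as lists.\<close>
fun supp_ctx :: "base \<Rightarrow> atom multiset \<Rightarrow> formula list \<Rightarrow> bool" where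
  "supp_ctx B P [] = False"
| "supp_ctx B P [\<phi>] = supp \<phi> B P"
| "supp_ctx B P (\<phi> # \<psi> # \<Gamma>) =
     (\<exists>U V. P = U + V \<and> supp \<phi> B U \<and> supp_ctx B V (\<psi> # \<Gamma>))"

text \<open>Inference: Gamma ||-^P_B phi for nonempty Gamma.\<close>
definition supp_inf :: "formula list \<Rightarrow> base \<Rightarrow> atom multiset \<Rightarrow> formula \<Rightarrow> bool" where
  "supp_inf \<Gamma> B P \<chi> = (\<forall>X U. B \<subseteq> X \<longrightarrow> supp_ctx X U \<Gamma> \<longrightarrow> supp \<chi> X (P + U))"

end

theory Submission imports Defs begin

text \<open>For an atom, \<open>I\<close> or a tensor, support of \<open>\<chi>\<close> is itself a statement
  about atomic derivability in extensions of the base, so the clause for \<open>\<phi> \<otimes> \<psi>\<close> can be applied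
  to it directly. For \<open>\<chi>\<^sub>1 \<multimap> \<chi>\<^sub>2\<close> the argument \<open>\<chi>\<^sub>1\<close> is absorbed into the resource of the
  inference and the induction hypothesis is used at the extended base, which is possible because
  support is monotone in the base.\<close>

lemma derives_mono: "derives B P p \<Longrightarrow> B \<subseteq> C \<Longrightarrow> derives C P p"
proof (induction rule: derives.induct)
  case Ref
  show ?case by (rule derives.Ref)
next
  case (App Ps p Ss)
  then show ?case by (auto intro: derives.App)
qed

lemma supp_TensorI:
  assumes "\<And>X U p. B \<subseteq> X \<Longrightarrow>
      (\<And>Y W1 W2. X \<subseteq> Y \<Longrightarrow> supp \<phi> Y W1 \<Longrightarrow> supp \<psi> Y W2 \<Longrightarrow> derives Y (U + (W1 + W2)) p) \<Longrightarrow>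
      derives X (S + U) p"
  shows "supp (Tensor \<phi> \<psi>) B S"
  unfolding supp.simps
proof (intro allI impI)
  fix X U p
  assume "B \<subseteq> X"
    and "\<forall>Y W. X \<subseteq> Y \<longrightarrow> (\<exists>W1 W2. W = W1 + W2 \<and> supp \<phi> Y W1 \<and> supp \<psi> Y W2) \<longrightarrow>
      derives Y (U + W) p"
  then show "derives X (S + U) p" by (intro assms) blast+
qed

lemma supp_TensorE:
  assumes "supp (Tensor \<phi> \<psi>) B S" "B \<subseteq> X"
    and "\<And>Y W1 W2. X \<subseteq> Y \<Longrightarrow> supp \<phi> Y W1 \<Longrightarrow> supp \<psi> Y W2 \<Longrightarrow> derives Y (U + (W1 + W2)) p"
  shows "derives X (S + U) p"
proof -
  have "\<forall>Y W. X \<subseteq> Y \<longrightarrow> (\<exists>W1 W2. W = W1 + W2 \<and> supp \<phi> Y W1 \<and> supp \<psi> Y W2) \<longrightarrow>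
      derives Y (U + W) p"
    using assms(3) by blast
  with assms(1,2) show ?thesis by simp
qed

lemma supp_mono: "supp \<phi> B P \<Longrightarrow> B \<subseteq> C \<Longrightarrow> supp \<phi> C P"
proof (induction \<phi> arbitrary: P)
  case (Atom q)
  then show ?case by (simp add: derives_mono)
next
  case (Tensor \<phi>1 \<phi>2)
  show ?case
  proof (rule supp_TensorI)
    fix X U p assume "C \<subseteq> X"
      and "\<And>Y W1 W2. X \<subseteq> Y \<Longrightarrow> supp \<phi>1 Y W1 \<Longrightarrow> supp \<phi>2 Y W2 \<Longrightarrow> derives Y (U + (W1 + W2)) p"
    then show "derives X (P + U) p"
      using Tensor.prems supp_TensorE[OF Tensor.prems(1)] by (meson order_trans)
  qed
qed auto

lemma supp_inf_pairD:
  assumes "supp_inf [\<phi>, \<psi>] B T \<chi>" "B \<subseteq> Y" "supp \<phi> Y W1" "supp \<psi> Y W2"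
  shows "supp \<chi> Y (T + (W1 + W2))"
  using assms unfolding supp_inf_def by auto

lemma supp_inf_LolliD:
  assumes "supp_inf \<Gamma> B T (Lolli \<chi>1 \<chi>2)" "B \<subseteq> X" "supp \<chi>1 X U"
  shows "supp_inf \<Gamma> X (T + U) \<chi>2"
  unfolding supp_inf_def
proof (intro allI impI)
  fix Y V assume "X \<subseteq> Y" "supp_ctx Y V \<Gamma>"
  have "supp (Lolli \<chi>1 \<chi>2) Y (T + V)"
    using assms(1,2) \<open>X \<subseteq> Y\<close> \<open>supp_ctx Y V \<Gamma>\<close> unfolding supp_inf_def by blast
  moreover have "supp \<chi>1 Y U" using assms(3) \<open>X \<subseteq> Y\<close> by (rule supp_mono)
  ultimately have "supp \<chi>2 Y (T + V + U)" using \<open>X \<subseteq> Y\<close> by simp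
  then show "supp \<chi>2 Y (T + U + V)" by (simp add: ac_simps)
qed

lemma supp_Tensor_cut_Atom:
  assumes "supp (Tensor \<phi> \<psi>) B S" "supp_inf [\<phi>, \<psi>] B T (Atom q)"
  shows "supp (Atom q) B (S + T)"
  using supp_TensorE[OF assms(1) order_refl] supp_inf_pairD[OF assms(2)] by simp

lemma supp_Tensor_cut_One:
  assumes "supp (Tensor \<phi> \<psi>) B S" "supp_inf [\<phi>, \<psi>] B T One"
  shows "supp One B (S + T)"
proof (simp only: supp.simps, intro allI impI)
  fix X U p assume "B \<subseteq> X" "derives X U p"
  have "derives X (S + (T + U)) p"
  proof (rule supp_TensorE[OF assms(1) \<open>B \<subseteq> X\<close>])
    fix Y W1 W2 assume "X \<subseteq> Y" "supp \<phi> Y W1" "supp \<psi> Y W2"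
    then have "supp One Y (T + (W1 + W2))"
      using supp_inf_pairD[OF assms(2)] \<open>B \<subseteq> X\<close> by blast
    moreover have "derives Y U p" using \<open>derives X U p\<close> \<open>X \<subseteq> Y\<close> by (rule derives_mono)
    ultimately have "derives Y (T + (W1 + W2) + U) p" by simp
    then show "derives Y (T + U + (W1 + W2)) p" by (simp add: ac_simps)
  qed
  then show "derives X (S + T + U) p" by (simp add: ac_simps)
qed

lemma supp_Tensor_cut_Tensor:
  assumes "supp (Tensor \<phi> \<psi>) B S" "supp_inf [\<phi>, \<psi>] B T (Tensor \<chi>1 \<chi>2)"
  shows "supp (Tensor \<chi>1 \<chi>2) B (S + T)"
proof (rule supp_TensorI)
  fix X U p
  assume "B \<subseteq> X"
    and elim: "\<And>Y V1 V2. X \<subseteq> Y \<Longrightarrow> supp \<chi>1 Y V1 \<Longrightarrow> supp \<chi>2 Y V2 \<Longrightarrow> derives Y (U + (V1 + V2)) p"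
  have "derives X (S + (T + U)) p"
  proof (rule supp_TensorE[OF assms(1) \<open>B \<subseteq> X\<close>])
    fix Y W1 W2 assume "X \<subseteq> Y" "supp \<phi> Y W1" "supp \<psi> Y W2"
    then have "supp (Tensor \<chi>1 \<chi>2) Y (T + (W1 + W2))"
      using supp_inf_pairD[OF assms(2)] \<open>B \<subseteq> X\<close> by blast
    then have "derives Y (T + (W1 + W2) + U) p"
      by (rule supp_TensorE[OF _ order_refl]) (use elim \<open>X \<subseteq> Y\<close> in blast)
    then show "derives Y (T + U + (W1 + W2)) p" by (simp add: ac_simps)
  qed
  then show "derives X (S + T + U) p" by (simp add: ac_simps)
qed

theorem lemma2:
  fixes B :: base and S T :: "atom multiset" and \<phi> \<psi> \<chi> :: formula
  assumes "supp (Tensor \<phi> \<psi>) B S"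
    and "supp_inf [\<phi>, \<psi>] B T \<chi>"
  shows "supp \<chi> B (S + T)"
  using assms
proof (induction \<chi> arbitrary: B S T)
  case (Lolli \<chi>1 \<chi>2)
  have "supp \<chi>2 X (S + T + U)" if "B \<subseteq> X" "supp \<chi>1 X U" for X U
  proof -
    have "supp (Tensor \<phi> \<psi>) X S" using Lolli.prems(1) \<open>B \<subseteq> X\<close> by (rule supp_mono)
    moreover have "supp_inf [\<phi>, \<psi>] X (T + U) \<chi>2"
      using Lolli.prems(2) that by (rule supp_inf_LolliD)
    ultimately show ?thesis using Lolli.IH(2) by (simp add: ac_simps)
  qed
  then show ?case by simp
next
  case Atom
  then show ?case by (rule supp_Tensor_cut_Atom)
next
  case One
  then show ?case by (rule supp_Tensor_cut_One)
next
  case Tensor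
  from Tensor.prems show ?case by (rule supp_Tensor_cut_Tensor)
qed

end
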